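(* Let $G$ be a countable group, equipped with a proper left-invariant metric, which is not locally finite. Suppose $E_1,E_2,E_3$ are pairwise disjoint NCC subsets of $G$. Then $G$ acts trivially on at most one of $E_1,E_2,E_3$.
   Context: A group is locally finite if every finite subset is contained in a finite subgroup. A subset $A$ of a metric space $X$ is coarsely clopen if for all $r>0$ there is a bounded $K$ such that no $x\in A\setminus K$, $y\in (X\setminus A)\setminus K$ satisfy $d(x,y)<r$. An NCC set (non-trivial coarsely clopen set) is a coarsely clopen $Y\subset X$ with both $Y$ and $X\setminus Y$ infinite (in a group with proper metric: unbounded). $G$ acts trivially on an NCC set $E\subset G$ if the symmetric difference $E\,\Delta\,(g\cdot E)$ is finite for every $g\in G$. *)

theory Defs
  imports "HOL-Algebra.Algebra"
begin

definition metric_on :: "'a set \<Rightarrow> ('a \<Rightarrow> 'a \<Rightarrow> real) \<Rightarrow> bool" where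
  "metric_on S d \<longleftrightarrow>
     (\<forall>x\<in>S. \<forall>y\<in>S. d x y \<ge> 0 \<and> (d x y = 0 \<longleftrightarrow> x = y) \<and> d x y = d y x) \<and>
     (\<forall>x\<in>S. \<forall>y\<in>S. \<forall>z\<in>S. d x z \<le> d x y + d y z)"

definition left_invariant :: "('a, 'b) monoid_scheme \<Rightarrow> ('a \<Rightarrow> 'a \<Rightarrow> real) \<Rightarrow> bool" where
  "left_invariant G d \<longleftrightarrow>
     (\<forall>g\<in>carrier G. \<forall>x\<in>carrier G. \<forall>y\<in>carrier G. d (g \<otimes>\<^bsub>G\<^esub> x) (g \<otimes>\<^bsub>G\<^esub> y) = d x y)"

definition mbounded :: "'a set \<Rightarrow> ('a \<Rightarrow> 'a \<Rightarrow> real) \<Rightarrow> 'a set \<Rightarrow> bool" where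
  "mbounded S d K \<longleftrightarrow> K \<subseteq> S \<and> (K = {} \<or> (\<exists>x\<in>S. \<exists>r. \<forall>y\<in>K. d x y \<le> r))"

text \<open>Proper metric: closed balls are finite (bounded sets are finite; the group is discrete).\<close>
definition proper_metric :: "'a set \<Rightarrow> ('a \<Rightarrow> 'a \<Rightarrow> real) \<Rightarrow> bool" where
  "proper_metric S d \<longleftrightarrow> (\<forall>x\<in>S. \<forall>r. finite {y\<in>S. d x y \<le> r})"

definition locally_finite_group :: "('a, 'b) monoid_scheme \<Rightarrow> bool" where
  "locally_finite_group G \<longleftrightarrow>
     (\<forall>F. F \<subseteq> carrier G \<and> finite F \<longrightarrow>
        (\<exists>H. subgroup H G \<and> finite H \<and> F \<subseteq> H))"

definition coarsely_clopen :: "'a set \<Rightarrow> ('a \<Rightarrow> 'a \<Rightarrow> real) \<Rightarrow> 'a set \<Rightarrow> bool" where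
  "coarsely_clopen S d A \<longleftrightarrow> A \<subseteq> S \<and>
     (\<forall>r>0. \<exists>K. mbounded S d K \<and>
        \<not> (\<exists>x\<in>A - K. \<exists>y\<in>(S - A) - K. d x y < r))"

definition NCC :: "'a set \<Rightarrow> ('a \<Rightarrow> 'a \<Rightarrow> real) \<Rightarrow> 'a set \<Rightarrow> bool" where
  "NCC S d Y \<longleftrightarrow> coarsely_clopen S d Y \<and> infinite Y \<and> infinite (S - Y)"

definition acts_trivially :: "('a, 'b) monoid_scheme \<Rightarrow> 'a set \<Rightarrow> bool" where
  "acts_trivially G E \<longleftrightarrow>
     (\<forall>g\<in>carrier G. finite ((E - (g <#\<^bsub>G\<^esub> E)) \<union> ((g <#\<^bsub>G\<^esub> E) - E)))"

end

theory Submission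
  imports Defs
begin

(* Suppose G acts trivially on E1 and E2, and label x by (x \<in> E1, x \<in> E2); the three sets
  lie in three different label classes. Since G is not locally finite, some finite symmetric
  set T generates an infinite subgroup H. Coarse clopenness makes the label constant along the
  Cayley edges x -- x s (s \<in> T) away from a finite set K, and triviality of the action makes
  it invariant under left translation up to finite sets; the latter forces every infinite
  label class to meet H infinitely often. Now take a ball C of the Cayley graph of H
  containing K \<inter> H and g \<in> H with g C disjoint from C. A path from any x \<in> H to 1 first
  hits C or g C, and comparing the label with its translate by g shows that x carries one of
  two labels unless x lies in a finite set: the three classes cannot all be infinite. *)

lemma rtranclp_first_entry:
  assumes "R\<^sup>*\<^sup>* x y" "x \<notin> B" "y \<in> B"
  shows "\<exists>z w. (\<lambda>a b. R a b \<and> a \<notin> B \<and> b \<notin> B)\<^sup>*\<^sup>* x z \<and> R z w \<and> z \<notin> B \<and> w \<in> B"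
  using assms
proof (induction rule: converse_rtranclp_induct)
  case base
  then show ?case by simp
next
  case (step x a)
  show ?case
  proof (cases "a \<in> B")
    case True
    then show ?thesis using step by blast
  next
    case False
    with step obtain z w where path: "(\<lambda>a b. R a b \<and> a \<notin> B \<and> b \<notin> B)\<^sup>*\<^sup>* a z"
      and "R z w" "z \<notin> B" "w \<in> B"
      by blast
    have "(\<lambda>a b. R a b \<and> a \<notin> B \<and> b \<notin> B) x a"
      using step.hyps(1) step.prems(1) False by simp
    then have "(\<lambda>a b. R a b \<and> a \<notin> B \<and> b \<notin> B)\<^sup>*\<^sup>* x z"
      using path by (rule converse_rtranclp_into_rtranclp)
    with \<open>R z w\<close> \<open>z \<notin> B\<close> \<open>w \<in> B\<close> show ?thesis by blast
  qed
qed

context group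
begin

lemma l_coset_memI: "y \<in> M \<Longrightarrow> g \<otimes> y \<in> g <# M"
  unfolding l_coset_def by blast

lemma l_coset_mem_iff:
  assumes "g \<in> carrier G" "y \<in> carrier G" "M \<subseteq> carrier G"
  shows "g \<otimes> y \<in> g <# M \<longleftrightarrow> y \<in> M"
  using assms unfolding l_coset_def by auto

lemma exists_translate_disjoint:
  assumes "finite C" "C \<subseteq> carrier G" "S \<subseteq> carrier G" "infinite S"
  shows "\<exists>g\<in>S. (g <# C) \<inter> C = {}"
proof -
  define Q where "Q = (\<lambda>(c, c'). c' \<otimes> inv c) ` (C \<times> C)"
  have "finite Q"
    unfolding Q_def using assms(1) by simp
  then obtain g where g: "g \<in> S" "g \<notin> Q"
    using assms(4) Diff_infinite_finite infinite_imp_nonempty by blast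
  have "g \<otimes> c \<notin> C" if "c \<in> C" for c
  proof
    assume "g \<otimes> c \<in> C"
    moreover have "g \<in> carrier G" "c \<in> carrier G"
      using that g(1) assms(2,3) by auto
    then have "g = (g \<otimes> c) \<otimes> inv c"
      by (simp add: m_assoc)
    ultimately have "g \<in> Q"
      unfolding Q_def using that by force
    with g(2) show False ..
  qed
  then show ?thesis
    using g(1) unfolding l_coset_def by blast
qed

lemma acts_trivially_finite_disagreement:
  assumes "acts_trivially G E" "E \<subseteq> carrier G" "h \<in> carrier G"
  shows "finite {y \<in> carrier G. (h \<otimes> y \<in> E) \<noteq> (y \<in> E)}"
proof -
  let ?S = "(E - (h <# E)) \<union> ((h <# E) - E)"
  have "{y \<in> carrier G. (h \<otimes> y \<in> E) \<noteq> (y \<in> E)} \<subseteq> (\<lambda>z. inv h \<otimes> z) ` ?S"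
  proof
    fix y
    assume y: "y \<in> {y \<in> carrier G. (h \<otimes> y \<in> E) \<noteq> (y \<in> E)}"
    then have "h \<otimes> y \<in> ?S"
      using l_coset_mem_iff[OF assms(3) _ assms(2)] by auto
    moreover have "y = inv h \<otimes> (h \<otimes> y)"
      using y assms(3) by (simp add: m_assoc[symmetric])
    ultimately show "y \<in> (\<lambda>z. inv h \<otimes> z) ` ?S" by blast
  qed
  moreover have "finite ?S"
    using assms(1,3) unfolding acts_trivially_def by blast
  ultimately show ?thesis
    using finite_subset by blast
qed

lemma mbounded_finite:
  assumes "proper_metric S d" "mbounded S d K"
  shows "finite K"
proof (cases "K = {}")
  case False
  with assms(2) obtain x r where "x \<in> S" "K \<subseteq> {y \<in> S. d x y \<le> r}"
    unfolding mbounded_def by blast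
  with assms(1) show ?thesis
    unfolding proper_metric_def by (meson finite_subset)
qed simp

lemma coarsely_clopen_finite_edge_boundary:
  assumes met: "metric_on (carrier G) d" and prp: "proper_metric (carrier G) d"
    and inv: "left_invariant G d" and cc: "coarsely_clopen (carrier G) d E"
    and T: "T \<subseteq> carrier G" "finite T"
  obtains K where "finite K"
    "\<And>a s. a \<in> carrier G \<Longrightarrow> s \<in> T \<Longrightarrow> a \<notin> K \<Longrightarrow> a \<otimes> s \<notin> K \<Longrightarrow> a \<otimes> s \<in> E \<longleftrightarrow> a \<in> E"
proof -
  define \<rho> where "\<rho> = (\<Sum>s\<in>T. d \<one> s) + 1"
  have d_sym: "d x y \<ge> 0 \<and> d x y = d y x" if "x \<in> carrier G" "y \<in> carrier G" for x y
    using met that unfolding metric_on_def by auto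
  have step_short: "d a (a \<otimes> s) < \<rho>" if "a \<in> carrier G" "s \<in> T" for a s
  proof -
    have "d (a \<otimes> \<one>) (a \<otimes> s) = d \<one> s"
      using inv that T unfolding left_invariant_def by blast
    moreover have "d \<one> s \<le> (\<Sum>s\<in>T. d \<one> s)"
      using that(2) T d_sym by (intro member_le_sum) auto
    ultimately show ?thesis
      unfolding \<rho>_def using that(1) by simp
  qed
  have "(\<Sum>s\<in>T. d \<one> s) \<ge> 0"
    using T d_sym by (intro sum_nonneg) auto
  then have "\<rho> > 0"
    unfolding \<rho>_def by simp
  then obtain K where K: "mbounded (carrier G) d K"
    and apart: "\<not> (\<exists>x\<in>E - K. \<exists>y\<in>(carrier G - E) - K. d x y < \<rho>)"
    using cc unfolding coarsely_clopen_def by blast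
  show ?thesis
  proof
    show "finite K"
      using mbounded_finite[OF prp K] .
  next
    fix a s
    assume a: "a \<in> carrier G" "s \<in> T" "a \<notin> K" "a \<otimes> s \<notin> K"
    then have "a \<otimes> s \<in> carrier G"
      using T by auto
    with a step_short[OF a(1,2)] d_sym[OF a(1)] apart
    show "a \<otimes> s \<in> E \<longleftrightarrow> a \<in> E"
      by fastforce
  qed
qed

end

locale cayley_graph = group G for G (structure) +
  fixes T :: "'a set"
  assumes gens_closed: "T \<subseteq> carrier G" and gens_finite: "finite T"
    and gens_inv: "s \<in> T \<Longrightarrow> inv s \<in> T"
begin

definition cayley_edge :: "'a \<Rightarrow> 'a \<Rightarrow> bool" where
  "cayley_edge x y \<longleftrightarrow> x \<in> carrier G \<and> (\<exists>s\<in>T. y = x \<otimes> s)"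

definition cayley_component :: "'a set" where
  "cayley_component = {x. cayley_edge\<^sup>*\<^sup>* \<one> x}"

primrec cayley_ball :: "nat \<Rightarrow> 'a set" where
  "cayley_ball 0 = {\<one>}"
| "cayley_ball (Suc n) = cayley_ball n \<union> (\<lambda>(x, s). x \<otimes> s) ` (cayley_ball n \<times> T)"

lemma cayley_edge_sym: "cayley_edge x y \<Longrightarrow> cayley_edge y x"
proof -
  assume "cayley_edge x y"
  then obtain s where s: "s \<in> T" "y = x \<otimes> s" "x \<in> carrier G"
    unfolding cayley_edge_def by blast
  then have "s \<in> carrier G"
    using gens_closed by blast
  with s have "y \<in> carrier G" "x = y \<otimes> inv s"
    by (simp_all add: m_assoc)
  with s(1) gens_inv show "cayley_edge y x"
    unfolding cayley_edge_def by blast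
qed

lemma cayley_edge_carrier: "cayley_edge x y \<Longrightarrow> x \<in> carrier G \<and> y \<in> carrier G"
  unfolding cayley_edge_def using gens_closed by auto

lemma cayley_path_sym: "cayley_edge\<^sup>*\<^sup>* x y \<Longrightarrow> cayley_edge\<^sup>*\<^sup>* y x"
  by (metis cayley_edge_sym sympI symp_rtranclp sympD)

lemma cayley_edge_translate:
  assumes "g \<in> carrier G" "cayley_edge x y"
  shows "cayley_edge (g \<otimes> x) (g \<otimes> y)"
proof -
  obtain s where s: "s \<in> T" "y = x \<otimes> s" "x \<in> carrier G"
    using assms(2) unfolding cayley_edge_def by blast
  with assms(1) gens_closed have "g \<otimes> y = (g \<otimes> x) \<otimes> s"
    by (auto simp: m_assoc)
  with s assms(1) show ?thesis
    unfolding cayley_edge_def by auto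
qed

lemma cayley_path_translate:
  "cayley_edge\<^sup>*\<^sup>* x y \<Longrightarrow> g \<in> carrier G \<Longrightarrow> cayley_edge\<^sup>*\<^sup>* (g \<otimes> x) (g \<otimes> y)"
  by (induction rule: rtranclp_induct)
    (auto intro: rtranclp.rtrancl_into_rtrancl cayley_edge_translate)

lemma cayley_component_carrier: "cayley_component \<subseteq> carrier G"
proof -
  have "cayley_edge\<^sup>*\<^sup>* x y \<Longrightarrow> x \<in> carrier G \<Longrightarrow> y \<in> carrier G" for x y
    by (induction rule: rtranclp_induct) (auto dest: cayley_edge_carrier)
  then show ?thesis
    unfolding cayley_component_def by blast
qed

lemma cayley_component_edge: "x \<in> cayley_component \<Longrightarrow> cayley_edge x y \<Longrightarrow> y \<in> cayley_component"
  unfolding cayley_component_def by auto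

lemma subgroup_cayley_component: "subgroup cayley_component G"
proof (rule subgroupI)
  show "cayley_component \<noteq> {}"
    unfolding cayley_component_def by blast
next
  fix x
  assume x: "x \<in> cayley_component"
  then have "x \<in> carrier G"
    using cayley_component_carrier by blast
  with x have "cayley_edge\<^sup>*\<^sup>* (inv x \<otimes> \<one>) (inv x \<otimes> x)"
    unfolding cayley_component_def by (intro cayley_path_translate) simp_all
  with \<open>x \<in> carrier G\<close> have "cayley_edge\<^sup>*\<^sup>* (inv x) \<one>"
    by simp
  then show "inv x \<in> cayley_component"
    unfolding cayley_component_def by (simp add: cayley_path_sym)
next
  fix x y
  assume x: "x \<in> cayley_component" and y: "y \<in> cayley_component"
  then have "x \<in> carrier G"
    using cayley_component_carrier by blast
  with y have "cayley_edge\<^sup>*\<^sup>* (x \<otimes> \<one>) (x \<otimes> y)"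
    unfolding cayley_component_def by (intro cayley_path_translate) simp_all
  with x \<open>x \<in> carrier G\<close> show "x \<otimes> y \<in> cayley_component"
    unfolding cayley_component_def by simp
qed (use cayley_component_carrier in blast)

lemma gens_subset_cayley_component: "T \<subseteq> cayley_component"
proof
  fix s
  assume "s \<in> T"
  then have "cayley_edge \<one> s"
    unfolding cayley_edge_def using gens_closed by (auto intro!: bexI[of _ s])
  then show "s \<in> cayley_component"
    unfolding cayley_component_def by blast
qed

lemma finite_cayley_ball: "finite (cayley_ball n)"
  by (induction n) (simp_all add: gens_finite)

lemma cayley_ball_subset_component: "cayley_ball n \<subseteq> cayley_component"
proof (induction n)
  case 0
  then show ?case
    unfolding cayley_component_def by simp
next
  case (Suc n)
  have "x \<otimes> s \<in> cayley_component" if "x \<in> cayley_component" "s \<in> T" for x s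
    using that cayley_component_carrier
    by (intro cayley_component_edge[OF that(1)]) (auto simp: cayley_edge_def)
  with Suc show ?case
    by auto
qed

lemma cayley_ball_mono: "n \<le> m \<Longrightarrow> cayley_ball n \<subseteq> cayley_ball m"
  by (rule lift_Suc_mono_le[of cayley_ball]) auto

lemma finite_subset_cayley_ball:
  assumes "finite A" "A \<subseteq> cayley_component"
  shows "\<exists>n. A \<subseteq> cayley_ball n"
proof -
  have in_ball: "\<exists>n. x \<in> cayley_ball n" if "cayley_edge\<^sup>*\<^sup>* \<one> x" for x
    using that
  proof (induction rule: rtranclp_induct)
    case base
    have "\<one> \<in> cayley_ball 0" by simp
    then show ?case ..
  next
    case (step x y)
    then obtain n s where "x \<in> cayley_ball n" "s \<in> T" "y = x \<otimes> s"
      unfolding cayley_edge_def by blast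
    then have "y \<in> cayley_ball (Suc n)"
      by auto
    then show ?case ..
  qed
  from assms show ?thesis
  proof (induction rule: finite_induct)
    case (insert a A)
    then obtain n m where "A \<subseteq> cayley_ball n" "a \<in> cayley_ball m"
      using in_ball unfolding cayley_component_def by blast
    then have "insert a A \<subseteq> cayley_ball (max n m)"
      using cayley_ball_mono[of n "max n m"] cayley_ball_mono[of m "max n m"] by auto
    then show ?case ..
  qed simp
qed

definition edge_constant_off :: "'a set \<Rightarrow> ('a \<Rightarrow> 'c) \<Rightarrow> bool" where
  "edge_constant_off B f \<longleftrightarrow>
     (\<forall>a b. cayley_edge a b \<longrightarrow> a \<in> cayley_component \<longrightarrow> a \<notin> B \<longrightarrow> b \<notin> B \<longrightarrow> f a = f b)"

lemma edge_constant_off_translate: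
  assumes f: "edge_constant_off B f" and g: "g \<in> cayley_component"
  shows "edge_constant_off (g <# B) (\<lambda>x. f (inv g \<otimes> x))"
  unfolding edge_constant_off_def
proof (intro allI impI)
  fix a b
  assume ab: "cayley_edge a b" "a \<in> cayley_component" "a \<notin> g <# B" "b \<notin> g <# B"
  have gc: "g \<in> carrier G" "inv g \<in> carrier G"
    using g cayley_component_carrier by auto
  have "inv g \<otimes> x \<notin> B" if "x \<notin> g <# B" "x \<in> carrier G" for x
    using that gc l_coset_memI[of "inv g \<otimes> x" B g] by (auto simp: m_assoc[symmetric])
  moreover have "inv g \<otimes> a \<in> cayley_component"
    using ab(2) g subgroup.m_closed[OF subgroup_cayley_component]
      subgroup.m_inv_closed[OF subgroup_cayley_component] by blast
  ultimately show "f (inv g \<otimes> a) = f (inv g \<otimes> b)"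
    using f ab cayley_edge_translate[OF gc(2) ab(1)] cayley_edge_carrier[OF ab(1)]
    unfolding edge_constant_off_def by blast
qed

lemma edge_constant_off_path:
  assumes "edge_constant_off B f" "(\<lambda>a b. cayley_edge a b \<and> a \<notin> B \<and> b \<notin> B)\<^sup>*\<^sup>* x z"
    "x \<in> cayley_component"
  shows "z \<in> cayley_component \<and> f z = f x"
  using assms(2)
proof (induction rule: rtranclp_induct)
  case (step y z)
  with assms(1) show ?case
    unfolding edge_constant_off_def by (metis cayley_component_edge)
qed (simp add: assms(3))

text \<open>Walking from x to \<one> one first enters B1 or B2; before that, both functions stay
  constant, and the entering edge does not leave the region where the other one is constant.\<close>
lemma edge_constant_off_two_barriers:
  assumes f1: "edge_constant_off B1 f1" and f2: "edge_constant_off B2 f2"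
    and disj: "B1 \<inter> B2 = {}" and one: "\<one> \<in> B1 \<union> B2"
    and x: "x \<in> cayley_component" "x \<notin> B1 \<union> B2"
  shows "(\<exists>w\<in>B1. f2 x = f2 w) \<or> (\<exists>w\<in>B2. f1 x = f1 w)"
proof -
  let ?B = "B1 \<union> B2"
  have "cayley_edge\<^sup>*\<^sup>* x \<one>"
    using x(1) cayley_path_sym unfolding cayley_component_def by blast
  then obtain z w where path: "(\<lambda>a b. cayley_edge a b \<and> a \<notin> ?B \<and> b \<notin> ?B)\<^sup>*\<^sup>* x z"
    and zw: "cayley_edge z w" "z \<notin> ?B" "w \<in> ?B"
    using rtranclp_first_entry[of cayley_edge x \<one> ?B] x(2) one by blast
  have path_i: "(\<lambda>a b. cayley_edge a b \<and> a \<notin> Bi \<and> b \<notin> Bi)\<^sup>*\<^sup>* x z" if "Bi \<subseteq> ?B" for Bi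
    using path by (rule rtranclp_mono[THEN predicate2D, rotated]) (use that in blast)
  have z: "z \<in> cayley_component" "f1 z = f1 x" "f2 z = f2 x"
    using edge_constant_off_path[OF f1 path_i x(1)] edge_constant_off_path[OF f2 path_i x(1)]
    by auto
  show ?thesis
  proof (cases "w \<in> B1")
    case True
    then have "f2 z = f2 w"
      using f2 zw z(1) disj unfolding edge_constant_off_def by blast
    with True z(3) show ?thesis by metis
  next
    case False
    then have "f1 z = f1 w"
      using f1 zw z(1) unfolding edge_constant_off_def by blast
    with False zw(3) z(2) show ?thesis by (metis UnE)
  qed
qed

lemma edge_constant_off_cayley_ball:
  assumes f: "edge_constant_off B f" and g: "g \<in> cayley_component"
  shows "(g <# cayley_ball n) \<inter> B = {} \<Longrightarrow> c \<in> cayley_ball n \<Longrightarrow> f (g \<otimes> c) = f g"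
proof (induction n arbitrary: c)
  case 0
  with g cayley_component_carrier show ?case by auto
next
  case (Suc n)
  have "g <# cayley_ball n \<subseteq> g <# cayley_ball (Suc n)"
    unfolding l_coset_def by auto
  with Suc.prems(1) have IH: "f (g \<otimes> y) = f g" if "y \<in> cayley_ball n" for y
    using Suc.IH that by blast
  show ?case
  proof (cases "c \<in> cayley_ball n")
    case False
    with Suc.prems(2) obtain y s where y: "y \<in> cayley_ball n" "s \<in> T" "c = y \<otimes> s"
      by auto
    have carrier: "g \<in> carrier G" "y \<in> carrier G" "s \<in> carrier G"
      using g y cayley_ball_subset_component cayley_component_carrier gens_closed by blast+
    have "cayley_edge (g \<otimes> y) (g \<otimes> c)"
      using carrier y unfolding cayley_edge_def by (auto simp: m_assoc intro!: bexI[of _ s])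
    moreover have "g \<otimes> y \<in> cayley_component"
      using g y cayley_ball_subset_component subgroup.m_closed[OF subgroup_cayley_component] by blast
    moreover have "g \<otimes> y \<notin> B" "g \<otimes> c \<notin> B"
      using Suc.prems y l_coset_memI[of _ "cayley_ball (Suc n)" g] by auto
    ultimately show ?thesis
      using f IH[OF y(1)] unfolding edge_constant_off_def by metis
  qed (use IH in blast)
qed

end

locale cayley_labelling = cayley_graph +
  fixes lab :: "'a \<Rightarrow> 'c" and K :: "'a set"
  assumes exceptions_finite: "finite K"
    and lab_edge: "a \<in> carrier G \<Longrightarrow> s \<in> T \<Longrightarrow> a \<notin> K \<Longrightarrow> a \<otimes> s \<notin> K \<Longrightarrow> lab (a \<otimes> s) = lab a"
    and lab_almost_invariant: "h \<in> carrier G \<Longrightarrow> finite {y \<in> carrier G. lab (h \<otimes> y) \<noteq> lab y}"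
begin

lemma lab_edge_constant_off:
  assumes "K \<inter> cayley_component \<subseteq> B"
  shows "edge_constant_off B lab"
  unfolding edge_constant_off_def
proof (intro allI impI)
  fix a b
  assume ab: "cayley_edge a b" "a \<in> cayley_component" "a \<notin> B" "b \<notin> B"
  then have "b \<in> cayley_component"
    using cayley_component_edge by blast
  with ab assms have "a \<notin> K" "b \<notin> K"
    by auto
  with ab(1) lab_edge show "lab a = lab b"
    unfolding cayley_edge_def by metis
qed

lemma lab_constant_on_coset:
  assumes x: "x \<in> carrier G" and avoid: "(x <# cayley_component) \<inter> K = {}"
    and y: "y \<in> cayley_component"
  shows "lab (x \<otimes> y) = lab x"
proof -
  have "cayley_edge\<^sup>*\<^sup>* \<one> y"
    using y unfolding cayley_component_def by simp
  then show ?thesis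
  proof (induction rule: rtranclp_induct)
    case base
    from x show ?case by simp
  next
    case (step y z)
    then have yz: "y \<in> cayley_component" "z \<in> cayley_component"
      unfolding cayley_component_def by auto
    obtain s where s: "s \<in> T" "z = y \<otimes> s" "y \<in> carrier G"
      using step.hyps(2) unfolding cayley_edge_def by blast
    then have "x \<otimes> z = (x \<otimes> y) \<otimes> s"
      using x gens_closed by (auto simp: m_assoc)
    moreover have "x \<otimes> y \<notin> K" "x \<otimes> z \<notin> K"
      using avoid yz l_coset_memI[of _ cayley_component x] by auto
    ultimately show ?case
      using lab_edge[of "x \<otimes> y" s] x s step.IH by auto
  qed
qed

text \<open>Cosets x H missing K carry a single label and only finitely many cosets meet K.
  If the class were finite on H, almost invariance would make it finite on every coset.\<close>
lemma infinite_label_class_in_component: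
  assumes H: "infinite cayley_component" and v: "infinite {x \<in> carrier G. lab x = v}"
  shows "infinite {x \<in> cayley_component. lab x = v}"
proof
  assume fin: "finite {x \<in> cayley_component. lab x = v}"
  have fin_translate: "finite {y \<in> cayley_component. lab (z \<otimes> y) = v}" if "z \<in> carrier G" for z
  proof -
    have "{y \<in> cayley_component. lab (z \<otimes> y) = v}
        \<subseteq> {x \<in> cayley_component. lab x = v} \<union> {y \<in> carrier G. lab (z \<otimes> y) \<noteq> lab y}"
      using cayley_component_carrier by auto
    with fin lab_almost_invariant[OF that] show ?thesis
      using finite_subset by blast
  qed
  have "{x \<in> carrier G. lab x = v}
      \<subseteq> (\<Union>k\<in>K \<inter> carrier G. (\<lambda>y. k \<otimes> y) ` {y \<in> cayley_component. lab (k \<otimes> y) = v})"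
  proof
    fix x
    assume "x \<in> {x \<in> carrier G. lab x = v}"
    then have x: "x \<in> carrier G" "lab x = v" by auto
    show "x \<in> (\<Union>k\<in>K \<inter> carrier G. (\<lambda>y. k \<otimes> y) ` {y \<in> cayley_component. lab (k \<otimes> y) = v})"
    proof (cases "(x <# cayley_component) \<inter> K = {}")
      case True
      then have "{y \<in> cayley_component. lab (x \<otimes> y) = v} = cayley_component"
        using lab_constant_on_coset[OF x(1)] x(2) by auto
      with fin_translate[OF x(1)] H show ?thesis by simp
    next
      case False
      then obtain h where h: "h \<in> cayley_component" "x \<otimes> h \<in> K"
        unfolding l_coset_def by blast
      then have hc: "h \<in> carrier G" "inv h \<in> cayley_component"
        using cayley_component_carrier subgroup.m_inv_closed[OF subgroup_cayley_component] by auto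
      have "x = (x \<otimes> h) \<otimes> inv h"
        using x(1) hc(1) by (simp add: m_assoc)
      with h hc x show ?thesis
        by (auto intro!: bexI[of _ "x \<otimes> h"] image_eqI[of _ _ "inv h"])
    qed
  qed
  moreover have "finite (\<Union>k\<in>K \<inter> carrier G. (\<lambda>y. k \<otimes> y) ` {y \<in> cayley_component. lab (k \<otimes> y) = v})"
    using exceptions_finite fin_translate by auto
  ultimately show False
    using v finite_subset by blast
qed

lemma component_two_labels:
  assumes H: "infinite cayley_component"
  shows "\<exists>a b. finite {x \<in> cayley_component. lab x \<noteq> a \<and> lab x \<noteq> b}"
proof -
  have "finite (K \<inter> cayley_component)"
    using exceptions_finite by simp
  then obtain n where "K \<inter> cayley_component \<subseteq> cayley_ball n"
    using finite_subset_cayley_ball by blast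
  define C where "C = cayley_ball n"
  have C: "finite C" "C \<subseteq> cayley_component" "K \<inter> cayley_component \<subseteq> C" "\<one> \<in> C"
    unfolding C_def using finite_cayley_ball cayley_ball_subset_component
      \<open>K \<inter> cayley_component \<subseteq> cayley_ball n\<close> cayley_ball_mono[of 0 n] by simp_all
  have C_carrier: "C \<subseteq> carrier G"
    using C(2) cayley_component_carrier by blast
  obtain g where g: "g \<in> cayley_component" "(g <# C) \<inter> C = {}"
    using exists_translate_disjoint[OF C(1) C_carrier cayley_component_carrier H] by blast
  have gc: "g \<in> carrier G"
    using g(1) cayley_component_carrier by blast
  define L where "L x = lab (inv g \<otimes> x)" for x
  have lab_off: "edge_constant_off C lab"
    using lab_edge_constant_off[OF C(3)] .
  have L_off: "edge_constant_off (g <# C) L"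
    unfolding L_def using edge_constant_off_translate[OF lab_off g(1)] .
  have one: "\<one> \<in> cayley_component"
    using C(2,4) by blast
  have L_on_C: "L c = L \<one>" if "c \<in> C" for c
  proof -
    have "(\<one> <# C) \<inter> (g <# C) = {}"
      using g(2) C_carrier by (simp add: lcos_mult_one Int_commute)
    then have "L (\<one> \<otimes> c) = L \<one>"
      using edge_constant_off_cayley_ball[OF L_off one] that unfolding C_def by blast
    with that C_carrier show ?thesis
      by (simp add: subsetD)
  qed
  have lab_on_gC: "lab w = lab g" if w: "w \<in> g <# C" for w
  proof -
    obtain c where "c \<in> C" "w = g \<otimes> c"
      using w unfolding l_coset_def by blast
    then show ?thesis
      using edge_constant_off_cayley_ball[OF lab_off g(1), of n c] g(2) unfolding C_def by simp
  qed
  define D where "D = {y \<in> carrier G. lab (inv g \<otimes> y) \<noteq> lab y}"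
  have "finite D"
    unfolding D_def using lab_almost_invariant gc by simp
  moreover have "finite (g <# C)"
    unfolding l_coset_def using C(1) by simp
  ultimately have fin: "finite (C \<union> (g <# C) \<union> D)"
    using C(1) by simp
  have "{x \<in> cayley_component. lab x \<noteq> L \<one> \<and> lab x \<noteq> lab g} \<subseteq> C \<union> (g <# C) \<union> D"
  proof (rule subsetI, rule ccontr)
    fix x
    assume x: "x \<in> {x \<in> cayley_component. lab x \<noteq> L \<one> \<and> lab x \<noteq> lab g}"
      and outside: "x \<notin> C \<union> (g <# C) \<union> D"
    then have lab_L: "lab x = L x"
      using cayley_component_carrier unfolding D_def L_def by auto
    have "(\<exists>w\<in>C. L x = L w) \<or> (\<exists>w\<in>g <# C. lab x = lab w)"
      using edge_constant_off_two_barriers[OF lab_off L_off g(2)[unfolded Int_commute[of "g <# C"]]]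
        C(4) x outside by simp
    then show False
    proof (elim disjE bexE)
      fix w
      assume "w \<in> C" "L x = L w"
      with L_on_C have "lab x = L \<one>"
        using lab_L by metis
      with x show False by simp
    next
      fix w
      assume "w \<in> g <# C" "lab x = lab w"
      with lab_on_gC have "lab x = lab g"
        by metis
      with x show False by simp
    qed
  qed
  with fin have "finite {x \<in> cayley_component. lab x \<noteq> L \<one> \<and> lab x \<noteq> lab g}"
    by (rule finite_subset[rotated])
  then show ?thesis by blast
qed

lemma at_most_two_infinite_labels:
  assumes "infinite cayley_component" "infinite {x \<in> carrier G. lab x = u}"
    "infinite {x \<in> carrier G. lab x = v}" "infinite {x \<in> carrier G. lab x = w}"
  shows "u = v \<or> u = w \<or> v = w"
proof -
  obtain a b where ab: "finite {x \<in> cayley_component. lab x \<noteq> a \<and> lab x \<noteq> b}"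
    using component_two_labels assms(1) by blast
  have "c = a \<or> c = b" if "infinite {x \<in> carrier G. lab x = c}" for c
  proof (rule ccontr)
    assume "\<not> (c = a \<or> c = b)"
    then have "{x \<in> cayley_component. lab x = c} \<subseteq> {x \<in> cayley_component. lab x \<noteq> a \<and> lab x \<noteq> b}"
      by auto
    with ab infinite_label_class_in_component[OF assms(1) that] show False
      using finite_subset by blast
  qed
  with assms(2-4) show ?thesis
    by metis
qed

end

context group
begin

lemma disjoint_NCC_not_two_trivial:
  assumes met: "metric_on (carrier G) d" and prp: "proper_metric (carrier G) d"
    and inv: "left_invariant G d" and not_lf: "\<not> locally_finite_group G"
    and N: "NCC (carrier G) d E1" "NCC (carrier G) d E2" "NCC (carrier G) d E3"
    and disj: "E1 \<inter> E2 = {}" "E1 \<inter> E3 = {}" "E2 \<inter> E3 = {}"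
  shows "\<not> (acts_trivially G E1 \<and> acts_trivially G E2)"
proof
  assume triv: "acts_trivially G E1 \<and> acts_trivially G E2"
  obtain F where F: "F \<subseteq> carrier G" "finite F"
    and no_finite: "\<And>H. subgroup H G \<Longrightarrow> F \<subseteq> H \<Longrightarrow> infinite H"
    using not_lf unfolding locally_finite_group_def by blast
  define T where "T = F \<union> (\<lambda>x. inv x) ` F"
  interpret cayley_graph G T
    by unfold_locales (use F in \<open>auto simp: T_def\<close>)
  have E: "E1 \<subseteq> carrier G" "E2 \<subseteq> carrier G" "E3 \<subseteq> carrier G"
    and cc: "coarsely_clopen (carrier G) d E1" "coarsely_clopen (carrier G) d E2"
    using N unfolding NCC_def coarsely_clopen_def by auto
  obtain K1 where K1: "finite K1"
    "\<And>a s. a \<in> carrier G \<Longrightarrow> s \<in> T \<Longrightarrow> a \<notin> K1 \<Longrightarrow> a \<otimes> s \<notin> K1 \<Longrightarrow> a \<otimes> s \<in> E1 \<longleftrightarrow> a \<in> E1"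
    using coarsely_clopen_finite_edge_boundary[OF met prp inv cc(1) gens_closed gens_finite] by blast
  obtain K2 where K2: "finite K2"
    "\<And>a s. a \<in> carrier G \<Longrightarrow> s \<in> T \<Longrightarrow> a \<notin> K2 \<Longrightarrow> a \<otimes> s \<notin> K2 \<Longrightarrow> a \<otimes> s \<in> E2 \<longleftrightarrow> a \<in> E2"
    using coarsely_clopen_finite_edge_boundary[OF met prp inv cc(2) gens_closed gens_finite] by blast
  define lab where "lab x = (x \<in> E1, x \<in> E2)" for x
  interpret cayley_labelling G T lab "K1 \<union> K2"
  proof
    show "finite (K1 \<union> K2)"
      using K1(1) K2(1) by simp
  next
    fix a s
    assume "a \<in> carrier G" "s \<in> T" "a \<notin> K1 \<union> K2" "a \<otimes> s \<notin> K1 \<union> K2"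
    then show "lab (a \<otimes> s) = lab a"
      using K1(2) K2(2) unfolding lab_def by simp
  next
    fix h
    assume h: "h \<in> carrier G"
    have "{y \<in> carrier G. lab (h \<otimes> y) \<noteq> lab y}
        = {y \<in> carrier G. (h \<otimes> y \<in> E1) \<noteq> (y \<in> E1)} \<union> {y \<in> carrier G. (h \<otimes> y \<in> E2) \<noteq> (y \<in> E2)}"
      unfolding lab_def by auto
    then show "finite {y \<in> carrier G. lab (h \<otimes> y) \<noteq> lab y}"
      using acts_trivially_finite_disagreement triv E h by simp
  qed
  have "infinite cayley_component"
    using no_finite subgroup_cayley_component gens_subset_cayley_component unfolding T_def by blast
  moreover have "E1 \<subseteq> {x \<in> carrier G. lab x = (True, False)}"
    "E2 \<subseteq> {x \<in> carrier G. lab x = (False, True)}"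
    "E3 \<subseteq> {x \<in> carrier G. lab x = (False, False)}"
    using E disj unfolding lab_def by auto
  then have "infinite {x \<in> carrier G. lab x = (True, False)}"
    "infinite {x \<in> carrier G. lab x = (False, True)}"
    "infinite {x \<in> carrier G. lab x = (False, False)}"
    using N unfolding NCC_def by (auto dest: finite_subset)
  ultimately show False
    using at_most_two_infinite_labels by blast
qed

end

theorem lemma5p9:
  fixes G :: "('a, 'b) monoid_scheme" and d :: "'a \<Rightarrow> 'a \<Rightarrow> real"
    and E1 E2 E3 :: "'a set"
  assumes "group G"
    and "countable (carrier G)"
    and "metric_on (carrier G) d"
    and "proper_metric (carrier G) d"
    and "left_invariant G d"
    and "\<not> locally_finite_group G"
    and "NCC (carrier G) d E1" and "NCC (carrier G) d E2" and "NCC (carrier G) d E3"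
    and "E1 \<inter> E2 = {}" and "E1 \<inter> E3 = {}" and "E2 \<inter> E3 = {}"
  shows "\<not> (acts_trivially G E1 \<and> acts_trivially G E2)
       \<and> \<not> (acts_trivially G E1 \<and> acts_trivially G E3)
       \<and> \<not> (acts_trivially G E2 \<and> acts_trivially G E3)"
proof -
  note not_two = group.disjoint_NCC_not_two_trivial[OF assms(1,3-6)]
  have "E2 \<inter> E1 = {}" "E3 \<inter> E1 = {}" "E3 \<inter> E2 = {}"
    using assms(10-12) by auto
  then show ?thesis
    using not_two[OF assms(7-12)] not_two[of E1 E3 E2] not_two[of E2 E3 E1] assms(7-12) by blast
qed

end
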